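(* Let $\mathcal{H}=\mathcal{H}_1\otimes\mathcal{H}_2\otimes\mathcal{H}_3$ with $\dim\mathcal{H}_i=d_i$, and let $U\in SU(d_1d_2d_3)$ act on $\mathcal{H}$, with matrix elements $U^{j_1j_2j_3}_{j_{1'}j_{2'}j_{3'}}=\langle j_1j_2j_3|U|j_{1'}j_{2'}j_{3'}\rangle$ and $(U^\dagger)^{j_{1'}j_{2'}j_{3'}}_{j_1j_2j_3}=\langle j_{1'}j_{2'}j_{3'}|U^\dagger|j_1j_2j_3\rangle$ in a fixed product orthonormal basis. Then the entangling power with respect to one-tangle satisfies $$\epsilon_1(U)=\tfrac13\left[\epsilon_{12|3}(U)+\epsilon_{13|2}(U)+\epsilon_{23|1}(U)\right],$$ and for each bipartition $ab|c\in\{12|3,\,13|2,\,23|1\}$, $$\epsilon_{ab|c}(U)=2\Bigg[1-\Bigg(\prod_{i=1}^3\frac{1}{d_i(d_i+1)}\Bigg)\,u_{\vec r}\,u_{\vec s}\,u_{\vec t}\,f^{ab|c}_{\vec r,\vec s,\vec t}(U)\Bigg],$$ where for a four-component index vector $\vec v=(v_1,v_2,v_3,v_4)$ we set $u_{\vec v}=\delta^{v_1}_{v_2}\delta^{v_3}_{v_4}+\delta^{v_1}_{v_4}\delta^{v_3}_{v_2}$, and $$f^{ab|c}_{\vec r,\vec s,\vec t}(U)=\delta^{i_a}_{l_a}\delta^{i_b}_{l_b}\delta^{i_c}_{j_c}\delta^{k_a}_{j_a}\delta^{k_b}_{j_b}\delta^{k_c}_{l_c}\,U^{i_1i_2i_3}_{r_1s_1t_1}(U^\dagger)^{r_2s_2t_2}_{j_1j_2j_3}U^{k_1k_2k_3}_{r_3s_3t_3}(U^\dagger)^{r_4s_4t_4}_{l_1l_2l_3}.$$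 Here the Einstein summation convention is used: all repeated indices are summed, in particular over all $\vec r\in\{0,\dots,d_1-1\}^4$, $\vec s\in\{0,\dots,d_2-1\}^4$, $\vec t\in\{0,\dots,d_3-1\}^4$, and over $i_m,j_m,k_m,l_m\in\{0,\dots,d_m-1\}$ for $m=1,2,3$ (subscripts $a,b,c$ on $i,j,k,l$ refer to the party labels).
   Context: For a pure state $|\psi\rangle\in\mathcal{H}$ and a bipartition $g|g'$ of the parties $\{1,2,3\}$, the generalized concurrence is $\tau_{g|g'}(|\psi\rangle)=2\big(1-\operatorname{tr}[(\operatorname{tr}_g|\psi\rangle\langle\psi|)^2]\big)$. The one-tangle is $\tau_1(|\psi\rangle)=\frac13[\tau_{12|3}+\tau_{13|2}+\tau_{23|1}](|\psi\rangle)$. For a unitary $U$ on $\mathcal{H}$, $\epsilon_{ab|c}(U)$ denotes the average of $\tau_{ab|c}(U|\psi_{\rm sep}\rangle)$ and $\epsilon_1(U)$ the average of $\tau_1(U|\psi_{\rm sep}\rangle)$, where $|\psi_{\rm sep}\rangle=|\psi_1\rangle\otimes|\psi_2\rangle\otimes|\psi_3\rangle$ with each $|\psi_i\rangle$ drawn independently from the unitarily invariant (Haar) measure on pure states of $\mathcal{H}_i$. *)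

theory Defs
  imports "HOL-Probability.Probability"
begin

text \<open>Dimensions d_i are encoded as finite index types 'n1, 'n2, 'n3 with d_i = CARD('n_i).
  Vectors in H_i are complex^'n_i; H = H_1 (x) H_2 (x) H_3 has basis indexed by 'n1 * 'n2 * 'n3.
  Matrices: U $ row $ col, i.e. U $ j $ j' = <j|U|j'>.\<close>

definition adj :: "complex^'m^'n \<Rightarrow> complex^'n^'m" where
  "adj A = (\<chi> i j. cnj (A $ j $ i))"

definition unitary_mat :: "complex^'n^'n \<Rightarrow> bool" where
  "unitary_mat A \<longleftrightarrow> A ** adj A = mat 1 \<and> adj A ** A = mat 1"

definition special_unitary :: "complex^'n^'n \<Rightarrow> bool" where
  "special_unitary A \<longleftrightarrow> unitary_mat A \<and> det A = 1"

definition haar_state_measure :: "(complex^'n) measure \<Rightarrow> bool" where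
  "haar_state_measure M \<longleftrightarrow>
     prob_space M \<and> sets M = sets borel \<and>
     (AE x in M. norm x = 1) \<and>
     (\<forall>V :: complex^'n^'n. unitary_mat V \<longrightarrow> distr M borel (\<lambda>x. V *v x) = M)"

definition prod_state :: "complex^'n1 \<Rightarrow> complex^'n2 \<Rightarrow> complex^'n3 \<Rightarrow> complex^('n1::finite \<times> 'n2::finite \<times> 'n3::finite)" where
  "prod_state x y z = (\<chi> p. x $ fst p * y $ fst (snd p) * z $ snd (snd p))"

definition red1 :: "complex^('n1::finite \<times> 'n2::finite \<times> 'n3::finite) \<Rightarrow> 'n1 \<Rightarrow> 'n1 \<Rightarrow> complex" where
  "red1 \<psi> j j' = (\<Sum>b\<in>UNIV. \<Sum>c\<in>UNIV. \<psi> $ (j,b,c) * cnj (\<psi> $ (j',b,c)))"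
definition red2 :: "complex^('n1::finite \<times> 'n2::finite \<times> 'n3::finite) \<Rightarrow> 'n2 \<Rightarrow> 'n2 \<Rightarrow> complex" where
  "red2 \<psi> j j' = (\<Sum>a\<in>UNIV. \<Sum>c\<in>UNIV. \<psi> $ (a,j,c) * cnj (\<psi> $ (a,j',c)))"
definition red3 :: "complex^('n1::finite \<times> 'n2::finite \<times> 'n3::finite) \<Rightarrow> 'n3 \<Rightarrow> 'n3 \<Rightarrow> complex" where
  "red3 \<psi> j j' = (\<Sum>a\<in>UNIV. \<Sum>b\<in>UNIV. \<psi> $ (a,b,j) * cnj (\<psi> $ (a,b,j')))"

text \<open>tr[rho^2] for a matrix given as a function on a finite index type (real for Hermitian rho).\<close>
definition purity :: "('k::finite \<Rightarrow> 'k \<Rightarrow> complex) \<Rightarrow> real" where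
  "purity \<rho> = Re (\<Sum>j\<in>UNIV. \<Sum>j'\<in>UNIV. \<rho> j j' * \<rho> j' j)"

text \<open>Generalized concurrence tau_{ab|c}; the bipartition ab|c is encoded by c \<in> {1,2,3}
  (c = 3: 12|3, c = 2: 13|2, c = 1: 23|1).  tau_{g|g'} = 2(1 - tr[(tr_g rho)^2]).\<close>
definition tau_bip :: "nat \<Rightarrow> complex^('n1::finite \<times> 'n2::finite \<times> 'n3::finite) \<Rightarrow> real" where
  "tau_bip c \<psi> = 2 * (1 - (if c = 1 then purity (red1 \<psi>)
                             else if c = 2 then purity (red2 \<psi>) else purity (red3 \<psi>)))"

definition one_tangle :: "complex^('n1::finite \<times> 'n2::finite \<times> 'n3::finite) \<Rightarrow> real" where
  "one_tangle \<psi> = (tau_bip 3 \<psi> + tau_bip 2 \<psi> + tau_bip 1 \<psi>) / 3"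

definition eps_bip :: "(complex^'n1) measure \<Rightarrow> (complex^'n2) measure \<Rightarrow> (complex^'n3) measure
    \<Rightarrow> nat \<Rightarrow> complex^('n1::finite \<times> 'n2::finite \<times> 'n3::finite)^('n1 \<times> 'n2 \<times> 'n3) \<Rightarrow> real" where
  "eps_bip M1 M2 M3 c U =
     (\<integral>(x,y,z). tau_bip c (U *v prod_state x y z) \<partial>(M1 \<Otimes>\<^sub>M (M2 \<Otimes>\<^sub>M M3)))"

definition eps_one :: "(complex^'n1) measure \<Rightarrow> (complex^'n2) measure \<Rightarrow> (complex^'n3) measure
    \<Rightarrow> complex^('n1::finite \<times> 'n2::finite \<times> 'n3::finite)^('n1 \<times> 'n2 \<times> 'n3) \<Rightarrow> real" where
  "eps_one M1 M2 M3 U =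
     (\<integral>(x,y,z). one_tangle (U *v prod_state x y z) \<partial>(M1 \<Otimes>\<^sub>M (M2 \<Otimes>\<^sub>M M3)))"

definition kd :: "'a \<Rightarrow> 'a \<Rightarrow> complex" where
  "kd x y = (if x = y then 1 else 0)"

definition u_vec :: "'a \<times> 'a \<times> 'a \<times> 'a \<Rightarrow> complex" where
  "u_vec v = (case v of (v1,v2,v3,v4) \<Rightarrow> kd v1 v2 * kd v3 v4 + kd v1 v4 * kd v3 v2)"

text \<open>Delta factor of party m: if m = c then delta(i_m,j_m) delta(k_m,l_m),
  else (m in {a,b}) delta(i_m,l_m) delta(k_m,j_m).\<close>
definition pdelta :: "bool \<Rightarrow> 'a \<Rightarrow> 'a \<Rightarrow> 'a \<Rightarrow> 'a \<Rightarrow> complex" where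
  "pdelta isc i j k l = (if isc then kd i j * kd k l else kd i l * kd k j)"

definition f_bip :: "nat \<Rightarrow> complex^('n1::finite \<times> 'n2::finite \<times> 'n3::finite)^('n1 \<times> 'n2 \<times> 'n3)
   \<Rightarrow> 'n1 \<times> 'n1 \<times> 'n1 \<times> 'n1 \<Rightarrow> 'n2 \<times> 'n2 \<times> 'n2 \<times> 'n2 \<Rightarrow> 'n3 \<times> 'n3 \<times> 'n3 \<times> 'n3 \<Rightarrow> complex" where
  "f_bip c U r s t =
    (case (r, s, t) of ((r1,r2,r3,r4), (s1,s2,s3,s4), (t1,t2,t3,t4)) \<Rightarrow>
     (\<Sum>i\<in>UNIV. \<Sum>j\<in>UNIV. \<Sum>k\<in>UNIV. \<Sum>l\<in>UNIV.
        (case (i, j, k, l) of ((i1,i2,i3), (j1,j2,j3), (k1,k2,k3), (l1,l2,l3)) \<Rightarrow>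
          pdelta (c = 1) i1 j1 k1 l1 * pdelta (c = 2) i2 j2 k2 l2 * pdelta (c = 3) i3 j3 k3 l3)
        * U $ i $ (r1,s1,t1) * cnj (U $ j $ (r2,s2,t2))
        * U $ k $ (r3,s3,t3) * cnj (U $ l $ (r4,s4,t4))))"

end

theory Submission
  imports Defs
begin

text \<open>All quantities are expectations of quartic forms
  \<open>\<psi>\<^sub>i \<psi>\<^sub>j\<^sup>* \<psi>\<^sub>k \<psi>\<^sub>l\<^sup>*\<close> in the output state \<open>\<psi> = U (x \<otimes> y \<otimes> z)\<close>: the purity
  of a reduced state is such a form, and expanding \<open>\<psi>\<close> in the product basis turns its
  expectation into a contraction of the entries of \<open>U\<close> with the fourth moments
  \<open>E[x\<^sub>p x\<^sub>q\<^sup>* x\<^sub>r x\<^sub>s\<^sup>*]\<close> of the independent Haar-random factors.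
  These moments follow from unitary invariance alone. Diagonal phase unitaries kill every moment
  whose indices do not pair up; a Hadamard rotation in the plane of two basis vectors gives
  \<open>E|x\<^sub>a|\<^sup>4 = 2 E|x\<^sub>a|\<^sup>2|x\<^sub>b|\<^sup>2\<close>; and \<open>\<parallel>x\<parallel> = 1\<close> fixes the normalisation, so
  \<open>E[x\<^sub>p x\<^sub>q\<^sup>* x\<^sub>r x\<^sub>s\<^sup>*] = (\<delta>\<^sub>p\<^sub>q \<delta>\<^sub>r\<^sub>s + \<delta>\<^sub>p\<^sub>s \<delta>\<^sub>r\<^sub>q) / (d (d + 1))\<close>.\<close>

lemma sum_UNIV_prod:
  "(\<Sum>p\<in>(UNIV::('a::finite \<times> 'b::finite) set). f p) = (\<Sum>a\<in>UNIV. \<Sum>b\<in>UNIV. f (a, b))"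
  by (simp add: sum.cartesian_product flip: UNIV_Times_UNIV)

lemma sum_product4:
  fixes f :: "'a \<Rightarrow> 'z::comm_semiring_0"
  shows "sum f A * sum g B * sum h C * sum k D =
    (\<Sum>(p, q, r, s)\<in>A \<times> B \<times> C \<times> D. f p * g q * h r * k s)"
  by (simp only: mult.assoc, simp only: sum_product sum.cartesian_product)
    (simp add: case_prod_beta mult.assoc)

lemma sum_of_bool_delta2:
  fixes f :: "'a::finite \<Rightarrow> 'b::finite \<Rightarrow> 'z::comm_semiring_1"
  shows "(\<Sum>j\<in>UNIV. \<Sum>l\<in>UNIV. of_bool (j = a) * of_bool (l = b) * f j l) = f a b"
  by (simp only: mult.assoc sum_distrib_left[symmetric] sum_of_bool_mult_eq finite Int_UNIV_left
      singleton_conv) simp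

lemma sum_UNIV_triple_reorder:
  fixes F :: "'a::finite \<times> 'b::finite \<times> 'c::finite \<Rightarrow> 'z::comm_monoid_add"
  shows "(\<Sum>i\<in>UNIV. F i) = (\<Sum>(b, a, c)\<in>UNIV. F (a, b, c))"
    and "(\<Sum>i\<in>UNIV. F i) = (\<Sum>(c, a, b)\<in>UNIV. F (a, b, c))"
  by (rule sum.reindex_bij_witness[where j = "\<lambda>(a, b, c). (b, a, c)"
        and i = "\<lambda>(b, a, c). (a, b, c)"]; auto)
    (rule sum.reindex_bij_witness[where j = "\<lambda>(a, b, c). (c, a, b)"
        and i = "\<lambda>(c, a, b). (a, b, c)"]; auto)

lemma sum_UNIV_triple_reorder2:
  fixes F :: "'a::finite \<times> 'b::finite \<times> 'c::finite \<Rightarrow> 'a \<times> 'b \<times> 'c \<Rightarrow> 'z::comm_monoid_add"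
  shows "(\<Sum>i\<in>UNIV. \<Sum>k\<in>UNIV. F i k) =
      (\<Sum>(b, a, c)\<in>UNIV. \<Sum>(b', a', c')\<in>UNIV. F (a, b, c) (a', b', c'))"
    and "(\<Sum>i\<in>UNIV. \<Sum>k\<in>UNIV. F i k) =
      (\<Sum>(c, a, b)\<in>UNIV. \<Sum>(c', a', b')\<in>UNIV. F (a, b, c) (a', b', c'))"
proof -
  have "(\<Sum>k\<in>UNIV. F i k) = (\<Sum>(b', a', c')\<in>UNIV. F i (a', b', c'))"
    and "(\<Sum>k\<in>UNIV. F i k) = (\<Sum>(c', a', b')\<in>UNIV. F i (a', b', c'))" for i
    by (rule sum_UNIV_triple_reorder)+
  then show "(\<Sum>i\<in>UNIV. \<Sum>k\<in>UNIV. F i k) =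
      (\<Sum>(b, a, c)\<in>UNIV. \<Sum>(b', a', c')\<in>UNIV. F (a, b, c) (a', b', c'))"
    and "(\<Sum>i\<in>UNIV. \<Sum>k\<in>UNIV. F i k) =
      (\<Sum>(c, a, b)\<in>UNIV. \<Sum>(c', a', b')\<in>UNIV. F (a, b, c) (a', b', c'))"
    by (simp_all only:) (rule sum_UNIV_triple_reorder)+
qed

lemma sum_partial_trace_sq:
  fixes \<phi> :: "'j \<Rightarrow> 'b \<Rightarrow> complex"
  shows "(\<Sum>j\<in>J. \<Sum>j'\<in>J. (\<Sum>b\<in>B. \<phi> j b * cnj (\<phi> j' b)) * (\<Sum>b\<in>B. \<phi> j' b * cnj (\<phi> j b))) =
    (\<Sum>j\<in>J. \<Sum>b\<in>B. \<Sum>j'\<in>J. \<Sum>b'\<in>B. \<phi> j b * cnj (\<phi> j b') * \<phi> j' b' * cnj (\<phi> j' b))"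
proof -
  have "(\<Sum>j\<in>J. \<Sum>j'\<in>J. (\<Sum>b\<in>B. \<phi> j b * cnj (\<phi> j' b)) * (\<Sum>b\<in>B. \<phi> j' b * cnj (\<phi> j b))) =
      (\<Sum>j\<in>J. \<Sum>j'\<in>J. \<Sum>b\<in>B. \<Sum>b'\<in>B. \<phi> j b * cnj (\<phi> j b') * \<phi> j' b' * cnj (\<phi> j' b))"
    by (simp add: sum_product ac_simps)
  also have "\<dots> = (\<Sum>j\<in>J. \<Sum>b\<in>B. \<Sum>j'\<in>J. \<Sum>b'\<in>B. \<phi> j b * cnj (\<phi> j b') * \<phi> j' b' * cnj (\<phi> j' b))"
    by (rule sum.cong[OF refl], rule sum.swap)
  finally show ?thesis .
qed

lemma integral_pair_measure_mult:
  fixes f :: "'a \<Rightarrow> 'c::{real_normed_field, banach, second_countable_topology}"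
  assumes "sigma_finite_measure M1" "sigma_finite_measure M2" "integrable M1 f" "integrable M2 g"
  shows "integrable (M1 \<Otimes>\<^sub>M M2) (\<lambda>(x, y). f x * g y)"
    and "(\<integral>(x, y). f x * g y \<partial>(M1 \<Otimes>\<^sub>M M2)) = integral\<^sup>L M1 f * integral\<^sup>L M2 g"
proof -
  interpret P: pair_sigma_finite M1 M2
    using assms(1,2) by (simp add: pair_sigma_finite_def)
  have [measurable]: "f \<in> borel_measurable M1" "g \<in> borel_measurable M2"
    using assms(3,4) by simp_all
  show int: "integrable (M1 \<Otimes>\<^sub>M M2) (\<lambda>(x, y). f x * g y)"
  proof (rule P.Fubini_integrable)
    have "integrable M1 (\<lambda>x. norm (f x) * (\<integral>y. norm (g y) \<partial>M2))"
      using assms(3) by (intro integrable_mult_left integrable_norm)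
    then show "integrable M1 (\<lambda>x. \<integral>y. norm (case (x, y) of (x, y) \<Rightarrow> f x * g y) \<partial>M2)"
      by (simp add: norm_mult)
    show "AE x in M1. integrable M2 (\<lambda>y. case (x, y) of (x, y) \<Rightarrow> f x * g y)"
      using assms(4) by simp
  qed measurable
  have "(\<integral>(x, y). f x * g y \<partial>(M1 \<Otimes>\<^sub>M M2)) = (\<integral>x. \<integral>y. f x * g y \<partial>M2 \<partial>M1)"
    using P.integral_fst'[OF int] by simp
  then show "(\<integral>(x, y). f x * g y \<partial>(M1 \<Otimes>\<^sub>M M2)) = integral\<^sup>L M1 f * integral\<^sup>L M2 g"
    by simp
qed

fun quartic :: "complex^'n \<Rightarrow> 'n \<times> 'n \<times> 'n \<times> 'n \<Rightarrow> complex" where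
  "quartic x (p, q, r, s) = x$p * cnj (x$q) * x$r * cnj (x$s)"

fun mat_quartic :: "complex^'m^'n \<Rightarrow> 'n \<times> 'n \<times> 'n \<times> 'n \<Rightarrow> 'm \<times> 'm \<times> 'm \<times> 'm \<Rightarrow> complex" where
  "mat_quartic A (i, j, k, l) (p, q, r, s) = A$i$p * cnj (A$j$q) * A$k$r * cnj (A$l$s)"

lemma quartic_matrix_vector_mult:
  fixes A :: "complex^'m::finite^'n"
  shows "quartic (A *v x) v = (\<Sum>w\<in>UNIV. mat_quartic A v w * quartic x w)"
proof (cases v)
  case (fields i j k l)
  have "(A *v x)$i = (\<Sum>p\<in>UNIV. A$i$p * x$p)" for i
    by (simp add: matrix_vector_mult_def)
  then have "quartic (A *v x) v = (\<Sum>(p, q, r, s)\<in>UNIV.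
      mat_quartic A v (p, q, r, s) * quartic x (p, q, r, s))"
    by (simp only: fields quartic.simps cnj_sum sum_product4) (simp add: case_prod_beta ac_simps)
  then show ?thesis
    by (simp only: case_prod_unfold prod.collapse)
qed

lemma continuous_quartic: "continuous_on UNIV (\<lambda>x. quartic x v)"
  by (cases v) (simp, intro continuous_intros)

section \<open>Fourth moments of Haar-random states\<close>

lemma haar_state_measureD:
  assumes "haar_state_measure M"
  shows "prob_space M" and "sets M = sets borel" and "AE x in M. norm x = 1"
    and "unitary_mat V \<Longrightarrow> distr M borel ((*v) V) = M"
  using assms unfolding haar_state_measure_def by auto

lemma haar_state_measure_borel_measurable:
  assumes "haar_state_measure M" "f \<in> borel_measurable borel"
  shows "f \<in> borel_measurable M"
  using assms(2) measurable_cong_sets[OF haar_state_measureD(2)[OF assms(1)] refl] by blast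

lemma integrable_quartic:
  assumes "haar_state_measure M"
  shows "integrable M (\<lambda>x. quartic x v)"
proof -
  interpret prob_space M
    using assms by (rule haar_state_measureD)
  have "norm (quartic x v) \<le> 1" if "norm x = 1" for x
  proof (cases v)
    case (fields p q r s)
    have "norm (x$i) \<le> 1" for i
      using Finite_Cartesian_Product.norm_nth_le[of x i] that by simp
    then show ?thesis
      by (simp add: fields norm_mult mult_le_one)
  qed
  then show ?thesis
    using haar_state_measureD(3)[OF assms]
    by (intro integrable_const_bound[where B = 1] haar_state_measure_borel_measurable[OF assms]
        borel_measurable_continuous_onI continuous_quartic) (auto elim: eventually_mono)
qed

definition fourth_moment :: "(complex^'n) measure \<Rightarrow> 'n \<times> 'n \<times> 'n \<times> 'n \<Rightarrow> complex" where
  "fourth_moment M v = (\<integral>x. quartic x v \<partial>M)"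

lemma fourth_moment_swap:
  "fourth_moment M (p, q, r, s) = fourth_moment M (r, q, p, s)"
  "fourth_moment M (p, q, r, s) = fourth_moment M (p, s, r, q)"
  unfolding fourth_moment_def by (simp_all add: mult_ac)

lemma integral_quartic_matrix_vector_mult:
  assumes "\<And>w. integrable M (\<lambda>x. quartic x w)"
  shows "(\<integral>x. quartic (A *v x) v \<partial>M) = (\<Sum>w\<in>UNIV. mat_quartic A v w * fourth_moment M w)"
  using assms by (simp add: quartic_matrix_vector_mult fourth_moment_def)

lemma fourth_moment_unitary_invariant:
  assumes "haar_state_measure M" "unitary_mat V"
  shows "fourth_moment M v = (\<Sum>w\<in>UNIV. mat_quartic V v w * fourth_moment M w)"
proof -
  have "fourth_moment M v = (\<integral>x. quartic x v \<partial>distr M borel ((*v) V))"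
    unfolding fourth_moment_def haar_state_measureD(4)[OF assms] ..
  also have "\<dots> = (\<integral>x. quartic (V *v x) v \<partial>M)"
    by (intro integral_distr haar_state_measure_borel_measurable[OF assms(1)]
        borel_measurable_continuous_onI linear_continuous_on matrix_vector_mul_bounded_linear
        continuous_quartic)
  finally show ?thesis
    using integral_quartic_matrix_vector_mult[OF integrable_quartic[OF assms(1)]] by simp
qed

definition diag_mat :: "complex^'n \<Rightarrow> complex^'n^'n" where
  "diag_mat d = (\<chi> i j. if i = j then d$i else 0)"

lemma unitary_diag_mat:
  assumes "\<And>i. norm (d$i) = 1"
  shows "unitary_mat (diag_mat d)"
proof -
  have "d$i * cnj (d$i) = 1" "cnj (d$i) * d$i = 1" for i
    using complex_norm_square[of "d$i"] assms[of i] by (simp_all add: mult.commute)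
  moreover have "(if P then x else 0) * y = (if P then x * y else 0)"
    and "cnj (if P then x else 0) = (if P then cnj x else 0)" for P and x y :: complex
    by simp_all
  ultimately show ?thesis
    by (simp add: unitary_mat_def matrix_matrix_mult_def adj_def diag_mat_def mat_def vec_eq_iff)
qed

lemma mat_quartic_diag_mat:
  "mat_quartic (diag_mat d) v w = of_bool (w = v) * quartic d v"
  by (cases v; cases w) (auto simp: diag_mat_def)

lemma fourth_moment_phase_invariant:
  assumes "haar_state_measure M" "\<And>i. norm (d$i) = 1"
  shows "fourth_moment M v = quartic d v * fourth_moment M v"
  using fourth_moment_unitary_invariant[OF assms(1) unitary_diag_mat[OF assms(2)], of v]
  by (simp add: mat_quartic_diag_mat mult.assoc)

lemma fourth_moment_eq_0:
  fixes M :: "(complex^'n::finite) measure"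
  assumes "haar_state_measure M" "\<not> (p = q \<and> r = s \<or> p = s \<and> r = q)"
  shows "fourth_moment M (p, q, r, s) = 0"
proof (rule ccontr)
  \<comment> \<open>The phase \<open>\<i>\<close> on coordinate \<open>a\<close> scales the moment by a power of \<open>\<i>\<close> that is 1
     for both \<open>a = p\<close> and \<open>a = r\<close> only when the indices pair up.\<close>
  define \<phi> where "\<phi> a = (\<chi> i. if i = a then \<i> else 1)" for a :: 'n
  assume "fourth_moment M (p, q, r, s) \<noteq> 0"
  then have "quartic (\<phi> a) (p, q, r, s) = 1" for a
    using fourth_moment_phase_invariant[OF assms(1), of "\<phi> a" "(p, q, r, s)"]
    by (simp add: \<phi>_def)
  from this[of p] this[of r] assms(2) show False
    unfolding \<phi>_def
    by (cases "p = q"; cases "p = r"; cases "p = s"; cases "q = r"; cases "q = s"; cases "r = s")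
      auto
qed

definition hadamard_mat :: "'n \<Rightarrow> 'n \<Rightarrow> complex^'n^'n" where
  "hadamard_mat a b = (\<chi> i j.
     if i \<in> {a, b} \<and> j \<in> {a, b} then (if i = b \<and> j = b then -1 else 1) / complex_of_real (sqrt 2)
     else of_bool (i = j))"

lemma unitary_hadamard_mat:
  fixes a b :: "'n::finite"
  assumes "a \<noteq> b"
  shows "unitary_mat (hadamard_mat a b)"
proof -
  let ?H = "hadamard_mat a b"
  have adj: "adj ?H = ?H"
    by (auto simp: adj_def hadamard_mat_def vec_eq_iff)
  have "(\<Sum>k\<in>UNIV. ?H$i$k * ?H$k$j) = of_bool (i = j)" for i j
  proof (cases "i \<in> {a, b} \<and> j \<in> {a, b}")
    case True
    have "(\<Sum>k\<in>UNIV. ?H$i$k * ?H$k$j) = (\<Sum>k\<in>{a, b}. ?H$i$k * ?H$k$j)"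
      using True by (intro sum.mono_neutral_right) (auto simp: hadamard_mat_def)
    also have "\<dots> = of_bool (i = j)"
      using True assms by (auto simp: hadamard_mat_def simp flip: of_real_mult)
    finally show ?thesis .
  next
    case False
    have row: "?H$i$k = of_bool (i = k)" if "i \<notin> {a, b}" for i k
      using that by (simp add: hadamard_mat_def)
    have col: "?H$k$j = of_bool (k = j)" if "j \<notin> {a, b}" for j k
      using that by (simp add: hadamard_mat_def)
    from False consider "i \<notin> {a, b}" | "j \<notin> {a, b}"
      by blast
    then show ?thesis
    proof cases
      case 1
      then show ?thesis
        by (simp add: row)
    next
      case 2
      then show ?thesis
        by (simp add: col)
    qed
  qed
  then have "?H ** ?H = mat 1"
    by (simp add: matrix_matrix_mult_def mat_def vec_eq_iff)
  then show ?thesis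
    by (simp add: unitary_mat_def adj)
qed

lemma fourth_moment_hadamard:
  fixes M :: "(complex^'n::finite) measure"
  assumes "haar_state_measure M" "a \<noteq> b"
  shows "4 * fourth_moment M (a, a, a, a) =
    fourth_moment M (a, a, a, a) + fourth_moment M (b, b, b, b) + 4 * fourth_moment M (a, a, b, b)"
proof -
  \<comment> \<open>Row \<open>a\<close> of the Hadamard matrix is \<open>(e\<^sub>a + e\<^sub>b)/\<surd>2\<close>, so invariance averages the
     moments over \<open>{a, b}\<^sup>4\<close>, where only the paired ones survive.\<close>
  let ?S = "{a, b} \<times> {a, b} \<times> {a, b} \<times> {a, b}"
  let ?m = "fourth_moment M"
  have row: "hadamard_mat a b $ a $ k = complex_of_real (of_bool (k \<in> {a, b}) / sqrt 2)" for k
    using assms(2) by (auto simp: hadamard_mat_def)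
  have quarter: "(of_bool P / sqrt 2) * (of_bool Q / sqrt 2) * (of_bool R / sqrt 2) *
      (of_bool T / sqrt 2) = of_bool (P \<and> Q \<and> R \<and> T) * (1 / 4 :: real)" for P Q R T
    by (simp add: power2_eq_square[symmetric])
  have "mat_quartic (hadamard_mat a b) (a, a, a, a) w = of_bool (w \<in> ?S) * (1 / 4)" for w
    by (cases w) (simp only: mat_quartic.simps row complex_cnj_complex_of_real mem_Times_iff
        fst_conv snd_conv quarter flip: of_real_mult, simp)
  then have "?m (a, a, a, a) = (\<Sum>w\<in>UNIV. of_bool (w \<in> ?S) * (1 / 4 * ?m w))"
    using fourth_moment_unitary_invariant[OF assms(1) unitary_hadamard_mat[OF assms(2)],
        of "(a, a, a, a)"]
    by (simp only: mult.assoc)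
  also have "\<dots> = 1 / 4 * (\<Sum>w\<in>?S. ?m w)"
    by (simp only: sum_of_bool_mult_eq finite Int_UNIV_left Collect_mem_eq sum_distrib_left)
  also have "(\<Sum>w\<in>?S. ?m w) = ?m (a, a, a, a) + ?m (b, b, b, b) + 4 * ?m (a, a, b, b)"
  proof -
    have "?m (b, b, a, a) = ?m (a, a, b, b)" "?m (a, b, b, a) = ?m (a, a, b, b)"
      "?m (b, a, a, b) = ?m (a, a, b, b)"
      by (metis fourth_moment_swap)+
    then show ?thesis
      using assms by (simp add: sum.cartesian_product' fourth_moment_eq_0)
  qed
  finally show ?thesis
    by simp
qed

lemma fourth_moment_pair:
  fixes M :: "(complex^'n::finite) measure"
  assumes "haar_state_measure M"
  shows "fourth_moment M (p, p, q, q) = (1 + kd p q) * fourth_moment M (a, a, a, a) / 2"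
proof -
  let ?m = "fourth_moment M"
  have swap: "?m (q, q, p, p) = ?m (p, p, q, q)" for p q
    by (metis fourth_moment_swap)
  have diag: "?m (p, p, p, p) = ?m (q, q, q, q)" for p q
  proof (cases "p = q")
    case False
    show ?thesis
      using fourth_moment_hadamard[OF assms False] fourth_moment_hadamard[OF assms not_sym[OF False]]
        swap[of p q]
      by algebra
  qed simp
  show ?thesis
  proof (cases "p = q")
    case False
    have "2 * ?m (p, p, q, q) = ?m (p, p, p, p)"
      using fourth_moment_hadamard[OF assms False] diag[of q p] by algebra
    then show ?thesis
      using False diag[of p a] by (simp add: kd_def mult.commute)
  qed (simp add: kd_def diag)
qed

lemma sum_fourth_moment_pair:
  assumes "haar_state_measure M"
  shows "(\<Sum>p\<in>UNIV. \<Sum>q\<in>UNIV. fourth_moment M (p, p, q, q)) = 1"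
proof -
  interpret prob_space M
    using assms by (rule haar_state_measureD)
  have "(\<Sum>p\<in>UNIV. \<Sum>q\<in>UNIV. fourth_moment M (p, p, q, q)) =
      (\<integral>x. (\<Sum>p\<in>UNIV. \<Sum>q\<in>UNIV. quartic x (p, p, q, q)) \<partial>M)"
    by (simp add: fourth_moment_def integrable_quartic[OF assms] del: quartic.simps)
  also have "\<dots> = (\<integral>x. 1 \<partial>M)"
  proof (intro integral_cong_AE)
    show "(\<lambda>x. \<Sum>p\<in>UNIV. \<Sum>q\<in>UNIV. quartic x (p, p, q, q)) \<in> borel_measurable M"
      by (intro borel_measurable_sum integrable_quartic[OF assms, THEN borel_measurable_integrable])
    show "AE x in M. (\<Sum>p\<in>UNIV. \<Sum>q\<in>UNIV. quartic x (p, p, q, q)) = 1"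
      using haar_state_measureD(3)[OF assms]
    proof eventually_elim
      case (elim x)
      have "(\<Sum>p\<in>UNIV. x$p * cnj (x$p)) = complex_of_real ((norm x)\<^sup>2)"
        by (simp add: norm_vec_def L2_set_def sum_nonneg flip: complex_norm_square)
      moreover have "(\<Sum>p\<in>UNIV. \<Sum>q\<in>UNIV. quartic x (p, p, q, q)) =
          (\<Sum>p\<in>UNIV. x$p * cnj (x$p)) * (\<Sum>q\<in>UNIV. x$q * cnj (x$q))"
        by (simp add: sum_product mult.assoc)
      ultimately show ?case
        using elim by simp
    qed
  qed simp
  also have "\<dots> = 1"
    by (simp add: prob_space)
  finally show ?thesis .
qed

lemma haar_fourth_moment:
  fixes M :: "(complex^'n::finite) measure"
  assumes "haar_state_measure M"
  shows "fourth_moment M v = u_vec v / (of_nat CARD('n) * (of_nat CARD('n) + 1))"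
proof -
  fix a :: 'n
  let ?A = "fourth_moment M (a, a, a, a)"
  have "1 = (\<Sum>p\<in>UNIV. \<Sum>q\<in>UNIV. fourth_moment M (p, p, q, q))"
    using sum_fourth_moment_pair[OF assms] ..
  also have "\<dots> = (\<Sum>p\<in>UNIV. \<Sum>q\<in>UNIV. (1 + kd (p :: 'n) q) * ?A / 2)"
    by (intro sum.cong[OF refl] fourth_moment_pair[OF assms])
  also have "\<dots> = (\<Sum>p\<in>UNIV. \<Sum>q\<in>UNIV. 1 + kd (p :: 'n) q) * ?A / 2"
    by (simp only: sum_distrib_right sum_divide_distrib)
  also have "\<dots> = of_nat CARD('n) * (of_nat CARD('n) + 1) * ?A / 2"
    by (simp add: sum.distrib kd_def)
  finally have A: "?A / 2 = 1 / (of_nat CARD('n) * (of_nat CARD('n) + 1))"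
    using of_nat_eq_0_iff[of "CARD('n) * Suc (CARD('n))", where 'a = complex]
    by (simp add: field_simps)
  show ?thesis
  proof (cases v)
    case (fields p q r s)
    consider "p = q \<and> r = s" | "p = s \<and> r = q" | "\<not> (p = q \<and> r = s \<or> p = s \<and> r = q)"
      by blast
    then show ?thesis
    proof cases
      case 1
      then show ?thesis
        using A fourth_moment_pair[OF assms, of p r a] by (simp add: fields u_vec_def kd_def)
    next
      case 2
      then show ?thesis
        using A fourth_moment_pair[OF assms, of p r a] fourth_moment_swap(2)[of M p q r s]
        by (simp add: fields u_vec_def kd_def)
    next
      case 3
      then show ?thesis
        using fourth_moment_eq_0[OF assms 3] by (auto simp: fields u_vec_def kd_def)
    qed
  qed
qed

fun zip_quad :: "'a \<times> 'a \<times> 'a \<times> 'a \<Rightarrow> 'b \<times> 'b \<times> 'b \<times> 'b \<Rightarrow> 'c \<times> 'c \<times> 'c \<times> 'c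
    \<Rightarrow> ('a \<times> 'b \<times> 'c) \<times> ('a \<times> 'b \<times> 'c) \<times> ('a \<times> 'b \<times> 'c) \<times> ('a \<times> 'b \<times> 'c)" where
  "zip_quad (r1, r2, r3, r4) (s1, s2, s3, s4) (t1, t2, t3, t4) =
    ((r1, s1, t1), (r2, s2, t2), (r3, s3, t3), (r4, s4, t4))"

lemma sum_zip_quad:
  "(\<Sum>w\<in>UNIV. g w) = (\<Sum>(r, s, t)\<in>UNIV. g (zip_quad r s t))"
  by (rule sum.reindex_bij_witness[where
        j = "\<lambda>((r1, s1, t1), (r2, s2, t2), (r3, s3, t3), (r4, s4, t4)).
               ((r1, r2, r3, r4), (s1, s2, s3, s4), (t1, t2, t3, t4))"
        and i = "\<lambda>(r, s, t). zip_quad r s t"]) auto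

lemma quartic_prod_state:
  "quartic (prod_state x y z) (zip_quad r s t) = quartic x r * quartic y s * quartic z t"
  by (cases r; cases s; cases t) (simp add: prod_state_def ac_simps)

lemma fourth_moment_prod_state:
  assumes "prob_space M1" "prob_space M2" "prob_space M3"
    and "integrable M1 (\<lambda>x. quartic x r)" "integrable M2 (\<lambda>y. quartic y s)"
    and "integrable M3 (\<lambda>z. quartic z t)"
  shows "integrable (M1 \<Otimes>\<^sub>M (M2 \<Otimes>\<^sub>M M3))
      (\<lambda>(x, y, z). quartic (prod_state x y z) (zip_quad r s t))"
    and "(\<integral>(x, y, z). quartic (prod_state x y z) (zip_quad r s t) \<partial>(M1 \<Otimes>\<^sub>M (M2 \<Otimes>\<^sub>M M3))) =
      fourth_moment M1 r * fourth_moment M2 s * fourth_moment M3 t"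
proof -
  note inner = integral_pair_measure_mult[OF prob_space_imp_sigma_finite[OF assms(2)]
      prob_space_imp_sigma_finite[OF assms(3)] assms(5,6)]
  note outer = integral_pair_measure_mult[OF prob_space_imp_sigma_finite[OF assms(1)]
      prob_space_imp_sigma_finite[OF prob_space_pair[OF assms(2,3)]] assms(4) inner(1)]
  show "integrable (M1 \<Otimes>\<^sub>M (M2 \<Otimes>\<^sub>M M3))
      (\<lambda>(x, y, z). quartic (prod_state x y z) (zip_quad r s t))"
    using outer(1) by (simp add: quartic_prod_state case_prod_beta' mult.assoc del: quartic.simps)
  show "(\<integral>(x, y, z). quartic (prod_state x y z) (zip_quad r s t) \<partial>(M1 \<Otimes>\<^sub>M (M2 \<Otimes>\<^sub>M M3))) =
      fourth_moment M1 r * fourth_moment M2 s * fourth_moment M3 t"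
    using outer(2) inner(2)
    by (simp add: quartic_prod_state case_prod_beta' mult.assoc fourth_moment_def
        del: quartic.simps)
qed

section \<open>Purities of the reduced states\<close>

text \<open>The Kronecker deltas in \<open>f_bip c\<close> pin the indices \<open>j\<close> and \<open>l\<close> to \<open>splice_party c i k\<close> and
  \<open>splice_party c k i\<close>, and \<open>bip_purity c \<psi>\<close> is the purity of the reduced state of party \<open>c\<close>.\<close>

definition splice_party :: "nat \<Rightarrow> 'a \<times> 'b \<times> 'c \<Rightarrow> 'a \<times> 'b \<times> 'c \<Rightarrow> 'a \<times> 'b \<times> 'c" where
  "splice_party c i k =
    (if c = 1 then fst i else fst k, if c = 2 then fst (snd i) else fst (snd k),
     if c = 3 then snd (snd i) else snd (snd k))"

definition bip_purity :: "nat \<Rightarrow> complex^('n1::finite \<times> 'n2::finite \<times> 'n3::finite) \<Rightarrow> complex" where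
  "bip_purity c \<psi> = (\<Sum>i\<in>UNIV. \<Sum>k\<in>UNIV. quartic \<psi> (i, splice_party c i k, k, splice_party c k i))"

lemma purity_hermitian:
  assumes "\<And>j j'. \<rho> j' j = cnj (\<rho> j j')"
  shows "complex_of_real (purity \<rho>) = (\<Sum>j\<in>UNIV. \<Sum>j'\<in>UNIV. \<rho> j j' * \<rho> j' j)"
proof -
  have "\<rho> j j' * \<rho> j' j = complex_of_real ((norm (\<rho> j j'))\<^sup>2)" for j j'
    using assms[of j' j] by (simp only: complex_norm_square)
  then show ?thesis
    by (simp add: purity_def)
qed

lemma sum_red1_sq: "(\<Sum>j\<in>UNIV. \<Sum>j'\<in>UNIV. red1 \<psi> j j' * red1 \<psi> j' j) = bip_purity 1 \<psi>"
proof -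
  have "red1 \<psi> j j' = (\<Sum>b\<in>UNIV. \<psi>$(j, b) * cnj (\<psi>$(j', b)))" for j j'
    by (simp add: red1_def sum_UNIV_prod)
  then show ?thesis
    using sum_partial_trace_sq[of "\<lambda>j b. \<psi>$(j, b)" UNIV UNIV]
    by (simp add: bip_purity_def splice_party_def sum_UNIV_prod)
qed

lemma sum_red2_sq: "(\<Sum>j\<in>UNIV. \<Sum>j'\<in>UNIV. red2 \<psi> j j' * red2 \<psi> j' j) = bip_purity 2 \<psi>"
proof -
  have "red2 \<psi> j j' = (\<Sum>(a, c)\<in>UNIV. \<psi>$(a, j, c) * cnj (\<psi>$(a, j', c)))" for j j'
    by (simp add: red2_def sum_UNIV_prod)
  then show ?thesis
    using sum_partial_trace_sq[of "\<lambda>j (a, c). \<psi>$(a, j, c)" UNIV UNIV]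
    unfolding bip_purity_def
    by (subst sum_UNIV_triple_reorder2(1)) (simp add: splice_party_def sum_UNIV_prod)
qed

lemma sum_red3_sq: "(\<Sum>j\<in>UNIV. \<Sum>j'\<in>UNIV. red3 \<psi> j j' * red3 \<psi> j' j) = bip_purity 3 \<psi>"
proof -
  have "red3 \<psi> j j' = (\<Sum>(a, b)\<in>UNIV. \<psi>$(a, b, j) * cnj (\<psi>$(a, b, j')))" for j j'
    by (simp add: red3_def sum_UNIV_prod)
  then show ?thesis
    using sum_partial_trace_sq[of "\<lambda>j (a, b). \<psi>$(a, b, j)" UNIV UNIV]
    unfolding bip_purity_def
    by (subst sum_UNIV_triple_reorder2(2)) (simp add: splice_party_def sum_UNIV_prod)
qed

lemma tau_bip_eq_bip_purity:
  assumes "c \<in> {1, 2, 3}"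
  shows "complex_of_real (tau_bip c \<psi>) = 2 * (1 - bip_purity c \<psi>)"
proof -
  have "red1 \<psi> j' j = cnj (red1 \<psi> j j')" "red2 \<psi> k' k = cnj (red2 \<psi> k k')"
    "red3 \<psi> l' l = cnj (red3 \<psi> l l')" for j j' k k' l l'
    by (simp_all add: red1_def red2_def red3_def cnj_sum mult.commute)
  note hermitian = purity_hermitian[OF this(1)] purity_hermitian[OF this(2)]
    purity_hermitian[OF this(3)]
  have "complex_of_real (purity (red1 \<psi>)) = bip_purity 1 \<psi>"
    "complex_of_real (purity (red2 \<psi>)) = bip_purity 2 \<psi>"
    "complex_of_real (purity (red3 \<psi>)) = bip_purity 3 \<psi>"
    by (simp_all only: hermitian sum_red1_sq sum_red2_sq sum_red3_sq)
  then show ?thesis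
    using assms by (auto simp: tau_bip_def)
qed

lemma pdelta_product_eq_of_bool:
  "(case (i, j, k, l) of ((i1, i2, i3), (j1, j2, j3), (k1, k2, k3), (l1, l2, l3)) \<Rightarrow>
      pdelta (c = 1) i1 j1 k1 l1 * pdelta (c = 2) i2 j2 k2 l2 * pdelta (c = 3) i3 j3 k3 l3) =
    of_bool (j = splice_party c i k) * of_bool (l = splice_party c k i)"
  by (cases i; cases j; cases k; cases l) (auto simp: pdelta_def kd_def splice_party_def)

lemma f_bip_eq_sum_mat_quartic:
  "f_bip c U r s t =
    (\<Sum>i\<in>UNIV. \<Sum>k\<in>UNIV.
      mat_quartic U (i, splice_party c i k, k, splice_party c k i) (zip_quad r s t))"
proof -
  obtain r1 r2 r3 r4 s1 s2 s3 s4 t1 t2 t3 t4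
    where rst: "r = (r1, r2, r3, r4)" "s = (s1, s2, s3, s4)" "t = (t1, t2, t3, t4)"
    by (cases r; cases s; cases t) auto
  let ?G = "\<lambda>i j k l. U $ i $ (r1, s1, t1) * cnj (U $ j $ (r2, s2, t2))
    * U $ k $ (r3, s3, t3) * cnj (U $ l $ (r4, s4, t4))"
  have "f_bip c U r s t = (\<Sum>i\<in>UNIV. \<Sum>j\<in>UNIV. \<Sum>k\<in>UNIV. \<Sum>l\<in>UNIV.
      of_bool (j = splice_party c i k) * of_bool (l = splice_party c k i) * ?G i j k l)"
    unfolding f_bip_def rst pdelta_product_eq_of_bool by (simp add: mult.assoc)
  also have "\<dots> = (\<Sum>i\<in>UNIV. \<Sum>k\<in>UNIV. \<Sum>j\<in>UNIV. \<Sum>l\<in>UNIV.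
      of_bool (j = splice_party c i k) * of_bool (l = splice_party c k i) * ?G i j k l)"
    by (rule sum.cong[OF refl], rule sum.swap)
  also have "\<dots> = (\<Sum>i\<in>UNIV. \<Sum>k\<in>UNIV. ?G i (splice_party c i k) k (splice_party c k i))"
    by (simp only: sum_of_bool_delta2)
  finally show ?thesis
    by (simp add: rst)
qed

lemma bip_purity_matrix_vector_mult:
  "bip_purity c (U *v x) = (\<Sum>(r, s, t)\<in>UNIV. f_bip c U r s t * quartic x (zip_quad r s t))"
proof -
  define G where "G i k v = (case v of (r, s, t) \<Rightarrow>
      mat_quartic U (i, splice_party c i k, k, splice_party c k i) (zip_quad r s t) *
      quartic x (zip_quad r s t))"
    for i k v
  have "bip_purity c (U *v x) = (\<Sum>i\<in>UNIV. \<Sum>k\<in>UNIV. \<Sum>v\<in>UNIV. G i k v)"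
    unfolding bip_purity_def quartic_matrix_vector_mult sum_zip_quad G_def ..
  also have "\<dots> = (\<Sum>v\<in>UNIV. \<Sum>i\<in>UNIV. \<Sum>k\<in>UNIV. G i k v)"
    by (subst sum.swap) (rule sum.cong[OF refl], rule sum.swap)
  also have "\<dots> = (\<Sum>(r, s, t)\<in>UNIV. f_bip c U r s t * quartic x (zip_quad r s t))"
    by (simp add: G_def f_bip_eq_sum_mat_quartic sum_distrib_right case_prod_beta)
  finally show ?thesis .
qed

lemma integral_bip_purity:
  fixes M1 :: "(complex^'n1::finite) measure" and M2 :: "(complex^'n2::finite) measure"
    and M3 :: "(complex^'n3::finite) measure"
  assumes h1: "haar_state_measure M1" and h2: "haar_state_measure M2"
    and h3: "haar_state_measure M3"
  shows "integrable (M1 \<Otimes>\<^sub>M (M2 \<Otimes>\<^sub>M M3)) (\<lambda>(x, y, z). bip_purity c (U *v prod_state x y z))"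
    and "(\<integral>(x, y, z). bip_purity c (U *v prod_state x y z) \<partial>(M1 \<Otimes>\<^sub>M (M2 \<Otimes>\<^sub>M M3))) =
      (1 / (of_nat CARD('n1) * (of_nat CARD('n1) + 1)))
      * (1 / (of_nat CARD('n2) * (of_nat CARD('n2) + 1)))
      * (1 / (of_nat CARD('n3) * (of_nat CARD('n3) + 1)))
      * (\<Sum>r\<in>UNIV. \<Sum>s\<in>UNIV. \<Sum>t\<in>UNIV. u_vec r * u_vec s * u_vec t * f_bip c U r s t)"
proof -
  let ?P = "M1 \<Otimes>\<^sub>M (M2 \<Otimes>\<^sub>M M3)"
  let ?Q = "\<lambda>r s t. \<lambda>(x, y, z). quartic (prod_state x y z) (zip_quad r s t)"
  note Q = fourth_moment_prod_state[OF haar_state_measureD(1)[OF h1] haar_state_measureD(1)[OF h2]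
      haar_state_measureD(1)[OF h3] integrable_quartic[OF h1] integrable_quartic[OF h2]
      integrable_quartic[OF h3]]
  have eq: "(\<lambda>(x, y, z). bip_purity c (U *v prod_state x y z)) =
      (\<lambda>p. \<Sum>(r, s, t)\<in>UNIV. f_bip c U r s t * ?Q r s t p)"
    by (auto simp: bip_purity_matrix_vector_mult fun_eq_iff case_prod_beta simp del: quartic.simps)
  have int: "integrable ?P (\<lambda>p. case v of (r, s, t) \<Rightarrow> f_bip c U r s t * ?Q r s t p)" for v
    by (cases v) (simp add: Q(1) del: quartic.simps)
  show "integrable ?P (\<lambda>(x, y, z). bip_purity c (U *v prod_state x y z))"
    unfolding eq by (intro Bochner_Integration.integrable_sum int)
  have "(\<integral>(x, y, z). bip_purity c (U *v prod_state x y z) \<partial>?P) =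
      (\<Sum>v\<in>UNIV. \<integral>p. (case v of (r, s, t) \<Rightarrow> f_bip c U r s t * ?Q r s t p) \<partial>?P)"
    unfolding eq by (intro Bochner_Integration.integral_sum int)
  also have "\<dots> = (\<Sum>(r, s, t)\<in>UNIV.
      f_bip c U r s t * (fourth_moment M1 r * fourth_moment M2 s * fourth_moment M3 t))"
    by (rule sum.cong[OF refl], clarsimp simp: Q(2) simp del: quartic.simps zip_quad.simps)
  finally show "(\<integral>(x, y, z). bip_purity c (U *v prod_state x y z) \<partial>?P) =
      (1 / (of_nat CARD('n1) * (of_nat CARD('n1) + 1)))
      * (1 / (of_nat CARD('n2) * (of_nat CARD('n2) + 1)))
      * (1 / (of_nat CARD('n3) * (of_nat CARD('n3) + 1)))
      * (\<Sum>r\<in>UNIV. \<Sum>s\<in>UNIV. \<Sum>t\<in>UNIV. u_vec r * u_vec s * u_vec t * f_bip c U r s t)"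
    by (simp add: haar_fourth_moment[OF h1] haar_fourth_moment[OF h2] haar_fourth_moment[OF h3]
        sum_UNIV_prod sum_distrib_left ac_simps)
qed

lemma eps_bip_eq_bip_purity:
  fixes M1 :: "(complex^'n1::finite) measure" and M2 :: "(complex^'n2::finite) measure"
    and M3 :: "(complex^'n3::finite) measure"
  assumes h1: "haar_state_measure M1" and h2: "haar_state_measure M2"
    and h3: "haar_state_measure M3"
    and c: "c \<in> {1, 2, 3}"
  shows "integrable (M1 \<Otimes>\<^sub>M (M2 \<Otimes>\<^sub>M M3)) (\<lambda>(x, y, z). tau_bip c (U *v prod_state x y z))"
    and "complex_of_real (eps_bip M1 M2 M3 c U) =
      2 * (1 - (\<integral>(x, y, z). bip_purity c (U *v prod_state x y z) \<partial>(M1 \<Otimes>\<^sub>M (M2 \<Otimes>\<^sub>M M3))))"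
proof -
  let ?P = "M1 \<Otimes>\<^sub>M (M2 \<Otimes>\<^sub>M M3)"
  let ?B = "\<lambda>(x, y, z). bip_purity c (U *v prod_state x y z)"
  interpret prob_space ?P
    using h1 h2 h3 by (intro prob_space_pair haar_state_measureD(1))
  have tau: "(\<lambda>(x, y, z). complex_of_real (tau_bip c (U *v prod_state x y z))) =
      (\<lambda>p. 2 * (1 - ?B p))"
    using tau_bip_eq_bip_purity[OF c] by (auto simp: fun_eq_iff)
  have tau_Re: "(\<lambda>(x, y, z). tau_bip c (U *v prod_state x y z)) = (\<lambda>p. Re (2 * (1 - ?B p)))"
    using arg_cong[OF tau, of "\<lambda>f p. Re (f p)"] by (simp add: case_prod_beta')
  have int_B: "integrable ?P ?B"
    by (rule integral_bip_purity[OF h1 h2 h3])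
  then show "integrable ?P (\<lambda>(x, y, z). tau_bip c (U *v prod_state x y z))"
    unfolding tau_Re
    by (intro integrable_Re integrable_mult_right Bochner_Integration.integrable_diff) simp_all
  have "complex_of_real (eps_bip M1 M2 M3 c U) =
      (\<integral>p. (\<lambda>(x, y, z). complex_of_real (tau_bip c (U *v prod_state x y z))) p \<partial>?P)"
    unfolding eps_bip_def by (simp add: case_prod_beta')
  also have "\<dots> = 2 * (1 - integral\<^sup>L ?P ?B)"
    unfolding tau using int_B by (simp add: prob_space)
  finally show "complex_of_real (eps_bip M1 M2 M3 c U) = 2 * (1 - integral\<^sup>L ?P ?B)" .
qed

theorem lemma1:
  fixes U :: "complex^('n1::finite \<times> 'n2::finite \<times> 'n3::finite)^('n1 \<times> 'n2 \<times> 'n3)"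
    and M1 :: "(complex^'n1) measure" and M2 :: "(complex^'n2) measure"
    and M3 :: "(complex^'n3) measure"
  assumes "special_unitary U"
    and "haar_state_measure M1" and "haar_state_measure M2" and "haar_state_measure M3"
  shows "eps_one M1 M2 M3 U = (eps_bip M1 M2 M3 3 U + eps_bip M1 M2 M3 2 U + eps_bip M1 M2 M3 1 U) / 3
    \<and> (\<forall>c\<in>{1,2,3::nat}.
         complex_of_real (eps_bip M1 M2 M3 c U) =
         2 * (1 - (1 / (of_nat CARD('n1) * (of_nat CARD('n1) + 1)))
                  * (1 / (of_nat CARD('n2) * (of_nat CARD('n2) + 1)))
                  * (1 / (of_nat CARD('n3) * (of_nat CARD('n3) + 1)))
                  * (\<Sum>r\<in>UNIV. \<Sum>s\<in>UNIV. \<Sum>t\<in>UNIV.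
                       u_vec r * u_vec s * u_vec t * f_bip c U r s t)))"
proof
  note tau_integrable = eps_bip_eq_bip_purity(1)[OF assms(2-4), of _ U, unfolded case_prod_beta']
  show "eps_one M1 M2 M3 U = (eps_bip M1 M2 M3 3 U + eps_bip M1 M2 M3 2 U + eps_bip M1 M2 M3 1 U) / 3"
    unfolding eps_one_def eps_bip_def one_tangle_def case_prod_beta'
    using tau_integrable[of 1] tau_integrable[of 2] tau_integrable[of 3] by simp
  show "\<forall>c\<in>{1,2,3::nat}.
         complex_of_real (eps_bip M1 M2 M3 c U) =
         2 * (1 - (1 / (of_nat CARD('n1) * (of_nat CARD('n1) + 1)))
                  * (1 / (of_nat CARD('n2) * (of_nat CARD('n2) + 1)))
                  * (1 / (of_nat CARD('n3) * (of_nat CARD('n3) + 1)))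
                  * (\<Sum>r\<in>UNIV. \<Sum>s\<in>UNIV. \<Sum>t\<in>UNIV.
                       u_vec r * u_vec s * u_vec t * f_bip c U r s t))"
    using eps_bip_eq_bip_purity(2)[OF assms(2-4)] integral_bip_purity(2)[OF assms(2-4)] by simp
qed

end
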